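(* Let $(\mathsf{Proc},\mathsf{Lab},\to,\rightsquigarrow)$ be a combined LTS that admits pre-reversibility. If $\iota_1$ and $\iota_2$ are two independence relations on its transitions such that both resulting LTSIs satisfy SP, BTI and PCI, then the two LTSIs have the same event equivalence $\sim$, the same core independence $\odot$, the same causal ordering $\le$ and the same conflict relation $\#$.
   Context: A combined LTS consists of processes $\mathsf{Proc}$, labels $\mathsf{Lab}$, a forward relation $P\xrightarrow aQ$ and a backward relation $P\rightsquigarrow^aQ$ with $P\xrightarrow aQ$ iff $Q\rightsquigarrow^aP$. A transition is a forward or backward step $t$ with inverse $\bar t$ (the same step in the opposite direction). Transitions are coinitial if they share a source; a path is a finite sequence of transitions each ending where the next starts; a path is rooted if its source cannot perform a backward transition. An LTSI adds an irreflexive symmetric relation $\iota$ on transitions (an independence relation). (SP) if coinitial $t:P\to Q$, $u:P\to R$ with $t\mathrel\iota u$ then there exist $u':Q\to S$ (same label and direction as $u$) and $t':R\to S$ (same label and direction as $t$); (BTI) distinct coinitial backward transitions are independent; (WF) there is no infinite sequence $P_0,P_1,\dots$ with a forward transition $P_{i+1}\to P_i$ for all $i$; (PCI) if $t:P\to Q$, $u:P\to R$, $u':Q\to S$, $t':R\to S$ with $u'$ having the label and direction of $u$, $t'$ those of $t$, and $t\mathrel\iota u$, then $u'\mathrel\iota\bar t$. An LTSI is pre-reversible if it satisfies SP, BTI, WF, PCI; a combined LTS admits pre-reversibility if some independence relation makes it a pre-reversible LTSI. Event equivalence $\sim$ is the smallest equivalence on transitions with $t\sim t'$ whenever $t,u,u',t'$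 form a square as in PCI with $t\mathrel\iota u$; events are $\sim$-classes $[t]$, forward events are classes of forward transitions, $\bar e=[\bar t]$. For a path $r$ and event $e$: $\sharp(\varepsilon,e)=0$, $\sharp(tr,e)=\sharp(r,e)+1$ if $t\in e$, $\sharp(r,e)-1$ if $t\in\bar e$, else $\sharp(r,e)$. Core independence $e\odot e'$: there are coinitial $t\in e$, $t'\in e'$ with $t\mathrel\iota t'$. For forward events: $e\le e'$ iff for all rooted paths $r$, $\sharp(r,e')>0$ implies $\sharp(r,e)>0$; $e\# e'$ iff there is no rooted path $r$ with $\sharp(r,e)>0$ and $\sharp(r,e')>0$. *)

theory Defs
  imports Main
begin

text \<open>A combined LTS is given by its forward relation fwd P a Q (P --a--> Q);
the backward relation is its converse: P ~~a~~> Q iff fwd Q a P.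
A transition records source, direction (True = forward), label and target.\<close>

datatype ('p, 'l) tr = Tr (src: 'p) (fw: bool) (lab: 'l) (tgt: 'p)

type_synonym ('p, 'l) lts = "'p \<Rightarrow> 'l \<Rightarrow> 'p \<Rightarrow> bool"

definition is_tr :: "('p, 'l) lts \<Rightarrow> ('p, 'l) tr \<Rightarrow> bool" where
  "is_tr fwd t = (if fw t then fwd (src t) (lab t) (tgt t) else fwd (tgt t) (lab t) (src t))"

definition inv_tr :: "('p, 'l) tr \<Rightarrow> ('p, 'l) tr" where
  "inv_tr t = Tr (tgt t) (\<not> fw t) (lab t) (src t)"

definition coinitial :: "('p, 'l) tr \<Rightarrow> ('p, 'l) tr \<Rightarrow> bool" where
  "coinitial t u = (src t = src u)"

definition indep_rel :: "('p, 'l) lts \<Rightarrow> (('p, 'l) tr \<Rightarrow> ('p, 'l) tr \<Rightarrow> bool) \<Rightarrow> bool" where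
  "indep_rel fwd \<iota> = ((\<forall>t u. \<iota> t u \<longrightarrow> is_tr fwd t \<and> is_tr fwd u)
                     \<and> (\<forall>t. \<not> \<iota> t t) \<and> (\<forall>t u. \<iota> t u \<longrightarrow> \<iota> u t))"

definition square :: "('p, 'l) lts \<Rightarrow> ('p, 'l) tr \<Rightarrow> ('p, 'l) tr \<Rightarrow> ('p, 'l) tr \<Rightarrow> ('p, 'l) tr \<Rightarrow> bool" where
  "square fwd t u u' t' = (is_tr fwd t \<and> is_tr fwd u \<and> is_tr fwd u' \<and> is_tr fwd t'
     \<and> src t = src u \<and> src u' = tgt t \<and> src t' = tgt u \<and> tgt u' = tgt t'
     \<and> lab u' = lab u \<and> fw u' = fw u \<and> lab t' = lab t \<and> fw t' = fw t)"

definition SP :: "('p, 'l) lts \<Rightarrow> (('p, 'l) tr \<Rightarrow> ('p, 'l) tr \<Rightarrow> bool) \<Rightarrow> bool" where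
  "SP fwd \<iota> = (\<forall>t u. is_tr fwd t \<and> is_tr fwd u \<and> coinitial t u \<and> \<iota> t u
                 \<longrightarrow> (\<exists>u' t'. square fwd t u u' t'))"

definition BTI :: "('p, 'l) lts \<Rightarrow> (('p, 'l) tr \<Rightarrow> ('p, 'l) tr \<Rightarrow> bool) \<Rightarrow> bool" where
  "BTI fwd \<iota> = (\<forall>t u. is_tr fwd t \<and> is_tr fwd u \<and> \<not> fw t \<and> \<not> fw u \<and> coinitial t u \<and> t \<noteq> u
                 \<longrightarrow> \<iota> t u)"

definition WF :: "('p, 'l) lts \<Rightarrow> bool" where
  "WF fwd = (\<not> (\<exists>f :: nat \<Rightarrow> 'p. \<forall>i. \<exists>a. fwd (f (Suc i)) a (f i)))"

definition PCI :: "('p, 'l) lts \<Rightarrow> (('p, 'l) tr \<Rightarrow> ('p, 'l) tr \<Rightarrow> bool) \<Rightarrow> bool" where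
  "PCI fwd \<iota> = (\<forall>t u u' t'. square fwd t u u' t' \<and> \<iota> t u \<longrightarrow> \<iota> u' (inv_tr t))"

definition pre_reversible :: "('p, 'l) lts \<Rightarrow> (('p, 'l) tr \<Rightarrow> ('p, 'l) tr \<Rightarrow> bool) \<Rightarrow> bool" where
  "pre_reversible fwd \<iota> = (indep_rel fwd \<iota> \<and> SP fwd \<iota> \<and> BTI fwd \<iota> \<and> WF fwd \<and> PCI fwd \<iota>)"

definition admits_pre_reversibility :: "('p, 'l) lts \<Rightarrow> bool" where
  "admits_pre_reversibility fwd = (\<exists>\<iota>. pre_reversible fwd \<iota>)"

inductive ev_eq :: "('p, 'l) lts \<Rightarrow> (('p, 'l) tr \<Rightarrow> ('p, 'l) tr \<Rightarrow> bool) \<Rightarrow> ('p, 'l) tr \<Rightarrow> ('p, 'l) tr \<Rightarrow> bool"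
  for fwd \<iota> where
  ev_refl: "is_tr fwd t \<Longrightarrow> ev_eq fwd \<iota> t t"
| ev_sym: "ev_eq fwd \<iota> t u \<Longrightarrow> ev_eq fwd \<iota> u t"
| ev_trans: "ev_eq fwd \<iota> t u \<Longrightarrow> ev_eq fwd \<iota> u v \<Longrightarrow> ev_eq fwd \<iota> t v"
| ev_square: "square fwd t u u' t' \<Longrightarrow> \<iota> t u \<Longrightarrow> ev_eq fwd \<iota> t t'"

definition ev_class :: "('p, 'l) lts \<Rightarrow> (('p, 'l) tr \<Rightarrow> ('p, 'l) tr \<Rightarrow> bool) \<Rightarrow> ('p, 'l) tr \<Rightarrow> ('p, 'l) tr set" where
  "ev_class fwd \<iota> t = {u. ev_eq fwd \<iota> t u}"

definition is_event :: "('p, 'l) lts \<Rightarrow> (('p, 'l) tr \<Rightarrow> ('p, 'l) tr \<Rightarrow> bool) \<Rightarrow> ('p, 'l) tr set \<Rightarrow> bool" where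
  "is_event fwd \<iota> e = (\<exists>t. is_tr fwd t \<and> e = ev_class fwd \<iota> t)"

definition is_fwd_event :: "('p, 'l) lts \<Rightarrow> (('p, 'l) tr \<Rightarrow> ('p, 'l) tr \<Rightarrow> bool) \<Rightarrow> ('p, 'l) tr set \<Rightarrow> bool" where
  "is_fwd_event fwd \<iota> e = (\<exists>t. is_tr fwd t \<and> fw t \<and> e = ev_class fwd \<iota> t)"

definition ev_bar :: "('p, 'l) lts \<Rightarrow> (('p, 'l) tr \<Rightarrow> ('p, 'l) tr \<Rightarrow> bool) \<Rightarrow> ('p, 'l) tr set \<Rightarrow> ('p, 'l) tr set" where
  "ev_bar fwd \<iota> e = (\<Union>t\<in>e. ev_class fwd \<iota> (inv_tr t))"

fun is_path :: "('p, 'l) lts \<Rightarrow> 'p \<Rightarrow> ('p, 'l) tr list \<Rightarrow> bool" where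
  "is_path fwd P [] = True"
| "is_path fwd P (t # r) = (is_tr fwd t \<and> src t = P \<and> is_path fwd (tgt t) r)"

definition rooted_path :: "('p, 'l) lts \<Rightarrow> 'p \<Rightarrow> ('p, 'l) tr list \<Rightarrow> bool" where
  "rooted_path fwd P r = (is_path fwd P r \<and> \<not> (\<exists>a Q. fwd Q a P))"

fun occ :: "('p, 'l) lts \<Rightarrow> (('p, 'l) tr \<Rightarrow> ('p, 'l) tr \<Rightarrow> bool) \<Rightarrow> ('p, 'l) tr list \<Rightarrow> ('p, 'l) tr set \<Rightarrow> int" where
  "occ fwd \<iota> [] e = 0"
| "occ fwd \<iota> (t # r) e = (if t \<in> e then occ fwd \<iota> r e + 1
                          else if t \<in> ev_bar fwd \<iota> e then occ fwd \<iota> r e - 1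
                          else occ fwd \<iota> r e)"

definition core_indep :: "(('p, 'l) tr \<Rightarrow> ('p, 'l) tr \<Rightarrow> bool) \<Rightarrow> ('p, 'l) tr set \<Rightarrow> ('p, 'l) tr set \<Rightarrow> bool" where
  "core_indep \<iota> e e' = (\<exists>t t'. t \<in> e \<and> t' \<in> e' \<and> coinitial t t' \<and> \<iota> t t')"

definition causes :: "('p, 'l) lts \<Rightarrow> (('p, 'l) tr \<Rightarrow> ('p, 'l) tr \<Rightarrow> bool) \<Rightarrow> ('p, 'l) tr set \<Rightarrow> ('p, 'l) tr set \<Rightarrow> bool" where
  "causes fwd \<iota> e e' = (\<forall>P r. rooted_path fwd P r \<longrightarrow> occ fwd \<iota> r e' > 0 \<longrightarrow> occ fwd \<iota> r e > 0)"

definition conflict :: "('p, 'l) lts \<Rightarrow> (('p, 'l) tr \<Rightarrow> ('p, 'l) tr \<Rightarrow> bool) \<Rightarrow> ('p, 'l) tr set \<Rightarrow> ('p, 'l) tr set \<Rightarrow> bool" where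
  "conflict fwd \<iota> e e' = (\<not> (\<exists>P r. rooted_path fwd P r \<and> occ fwd \<iota> r e > 0 \<and> occ fwd \<iota> r e' > 0))"

end

theory Submission
  imports Defs
begin

text \<open>Under SP, BTI and PCI the independence of two coinitial transitions is forced: t and u
are independent iff they are distinct and close a square whose side u' is not the reverse of t.
For two forward transitions, reverse the square: its two backward transitions out of the bottom
corner are independent by BTI, and PCI applied twice carries this independence back to the top.
A forward/backward pair is reduced to this case by rotating the square, and two backward
transitions are handled by BTI directly. Event equivalence and core independence consult the
independence relation on coinitial pairs only, and causality and conflict are determined by event
equivalence, so all four structures coincide.\<close>

lemma is_tr_inv_tr [simp]: "is_tr fwd (inv_tr t) = is_tr fwd t"
  by (simp add: is_tr_def inv_tr_def)

lemma inv_tr_inv_tr [simp]: "inv_tr (inv_tr t) = t"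
  by (cases t) (simp add: inv_tr_def)

lemma inv_tr_sel [simp]:
  "src (inv_tr t) = tgt t" "tgt (inv_tr t) = src t" "fw (inv_tr t) = (\<not> fw t)" "lab (inv_tr t) = lab t"
  by (simp_all add: inv_tr_def)

lemma tr_eq_iff: "x = y \<longleftrightarrow> src x = src y \<and> fw x = fw y \<and> lab x = lab y \<and> tgt x = tgt y"
  by (cases x; cases y) auto

lemma square_swap: "square fwd t u u' t' \<Longrightarrow> square fwd u t t' u'"
  by (auto simp: square_def)

lemma square_rotate: "square fwd t u u' t' \<Longrightarrow> square fwd (inv_tr u) t' t (inv_tr u')"
  by (auto simp: square_def)

lemma square_reverse:
  "square fwd t u u' t' \<Longrightarrow> square fwd (inv_tr t') (inv_tr u') (inv_tr u) (inv_tr t)"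
  by (auto simp: square_def)

lemma square_degenerate_iff: "square fwd t u u' t' \<Longrightarrow> u' = inv_tr t \<longleftrightarrow> t' = inv_tr u"
  by (auto simp: square_def tr_eq_iff)

definition diamond :: "('p, 'l) lts \<Rightarrow> ('p, 'l) tr \<Rightarrow> ('p, 'l) tr \<Rightarrow> bool" where
  "diamond fwd t u \<longleftrightarrow> t \<noteq> u \<and> (\<exists>u' t'. square fwd t u u' t' \<and> u' \<noteq> inv_tr t)"

lemma diamond_sym: "diamond fwd t u \<Longrightarrow> diamond fwd u t"
  unfolding diamond_def by (metis square_swap square_degenerate_iff)

lemma PCI_rotate:
  assumes "PCI fwd \<iota>" "square fwd t u u' t'" "\<iota> (inv_tr u) t'"
  shows "\<iota> t u"
  using assms square_rotate[OF assms(2)] unfolding PCI_def by force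

lemma indep_if_forward_square:
  assumes "BTI fwd \<iota>" "PCI fwd \<iota>" "square fwd t u u' t'" "fw t" "fw u" "t \<noteq> u"
  shows "\<iota> t u"
proof -
  have "inv_tr t' \<noteq> inv_tr u'"
    using assms(3-6) by (auto simp: square_def tr_eq_iff)
  then have "\<iota> (inv_tr t') (inv_tr u')"
    using assms(1,3-5) unfolding BTI_def square_def coinitial_def by auto
  then have "\<iota> (inv_tr u) t'"
    using assms(2) square_reverse[OF assms(3)] unfolding PCI_def by force
  then show ?thesis
    using PCI_rotate assms(2,3) by blast
qed

lemma indep_if_diamond_forward:
  assumes "BTI fwd \<iota>" "PCI fwd \<iota>" "diamond fwd t u" "fw t"
  shows "\<iota> t u"
proof -
  obtain u' t' where sq: "square fwd t u u' t'" and "u' \<noteq> inv_tr t" and "t \<noteq> u"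
    using assms(3) unfolding diamond_def by blast
  show ?thesis
  proof (cases "fw u")
    case True
    then show ?thesis
      using indep_if_forward_square assms(1,2,4) sq \<open>t \<noteq> u\<close> by blast
  next
    case False
    have "t' \<noteq> inv_tr u"
      using square_degenerate_iff[OF sq] \<open>u' \<noteq> inv_tr t\<close> by blast
    then have "\<iota> (inv_tr u) t'"
      using indep_if_forward_square[OF assms(1,2) square_rotate[OF sq]] sq assms(4) False
      by (auto simp: square_def)
    then show ?thesis
      using PCI_rotate assms(2) sq by blast
  qed
qed

lemma indep_iff_diamond:
  assumes "indep_rel fwd \<iota>" "SP fwd \<iota>" "BTI fwd \<iota>" "PCI fwd \<iota>" "coinitial t u"
  shows "\<iota> t u \<longleftrightarrow> diamond fwd t u"
proof
  assume tu: "\<iota> t u"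
  have irrefl: "\<not> \<iota> x x" for x
    using assms(1) unfolding indep_rel_def by blast
  have "is_tr fwd t" "is_tr fwd u"
    using assms(1) tu unfolding indep_rel_def by blast+
  then obtain u' t' where sq: "square fwd t u u' t'"
    using assms(2,5) tu unfolding SP_def by blast
  then have "\<iota> u' (inv_tr t)"
    using assms(4) tu unfolding PCI_def by blast
  then show "diamond fwd t u"
    using sq tu irrefl unfolding diamond_def by metis
next
  assume dia: "diamond fwd t u"
  consider "fw t" | "fw u" | "\<not> fw t" "\<not> fw u" by blast
  then show "\<iota> t u"
  proof cases
    case 1
    then show ?thesis using indep_if_diamond_forward assms(3,4) dia by blast
  next
    case 2
    then have "\<iota> u t" using indep_if_diamond_forward assms(3,4) diamond_sym[OF dia] by blast
    then show ?thesis using assms(1) unfolding indep_rel_def by blast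
  next
    case 3
    moreover obtain u' t' where "square fwd t u u' t'" "t \<noteq> u"
      using dia unfolding diamond_def by blast
    ultimately show ?thesis
      using assms(3,5) unfolding BTI_def square_def by blast
  qed
qed

lemma ev_eq_mono:
  assumes "\<And>t u. coinitial t u \<Longrightarrow> \<iota>1 t u \<Longrightarrow> \<iota>2 t u"
  shows "ev_eq fwd \<iota>1 t u \<Longrightarrow> ev_eq fwd \<iota>2 t u"
proof (induction rule: ev_eq.induct)
  case (ev_square t u u' t')
  then have "\<iota>2 t u" using assms by (auto simp: square_def coinitial_def)
  then show ?case using ev_square ev_eq.ev_square by blast
qed (auto intro: ev_eq.intros)

lemma ev_eq_cong:
  assumes "\<And>t u. coinitial t u \<Longrightarrow> \<iota>1 t u \<longleftrightarrow> \<iota>2 t u"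
  shows "ev_eq fwd \<iota>1 = ev_eq fwd \<iota>2"
  using ev_eq_mono[of \<iota>1 \<iota>2] ev_eq_mono[of \<iota>2 \<iota>1] assms by (intro ext iffI) blast+

lemma core_indep_cong:
  assumes "\<And>t u. coinitial t u \<Longrightarrow> \<iota>1 t u \<longleftrightarrow> \<iota>2 t u"
  shows "core_indep \<iota>1 = core_indep \<iota>2"
  using assms unfolding core_indep_def by (intro ext) blast

lemma occ_cong:
  assumes "ev_eq fwd \<iota>1 = ev_eq fwd \<iota>2"
  shows "occ fwd \<iota>1 r e = occ fwd \<iota>2 r e"
proof -
  have "ev_class fwd \<iota>1 = ev_class fwd \<iota>2"
    using assms by (intro ext) (simp add: ev_class_def)
  then have "ev_bar fwd \<iota>1 = ev_bar fwd \<iota>2"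
    by (intro ext) (simp add: ev_bar_def)
  then show ?thesis by (induction r) simp_all
qed

theorem proposition5p12:
  fixes fwd :: "'p \<Rightarrow> 'l \<Rightarrow> 'p \<Rightarrow> bool"
    and \<iota>1 \<iota>2 :: "('p, 'l) tr \<Rightarrow> ('p, 'l) tr \<Rightarrow> bool"
  assumes "admits_pre_reversibility fwd"
    and "indep_rel fwd \<iota>1" and "SP fwd \<iota>1" and "BTI fwd \<iota>1" and "PCI fwd \<iota>1"
    and "indep_rel fwd \<iota>2" and "SP fwd \<iota>2" and "BTI fwd \<iota>2" and "PCI fwd \<iota>2"
  shows "ev_eq fwd \<iota>1 = ev_eq fwd \<iota>2
    \<and> (\<forall>e e'. is_event fwd \<iota>1 e \<and> is_event fwd \<iota>1 e' \<longrightarrow> (core_indep \<iota>1 e e' \<longleftrightarrow> core_indep \<iota>2 e e'))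
    \<and> (\<forall>e e'. is_fwd_event fwd \<iota>1 e \<and> is_fwd_event fwd \<iota>1 e' \<longrightarrow> (causes fwd \<iota>1 e e' \<longleftrightarrow> causes fwd \<iota>2 e e'))
    \<and> (\<forall>e e'. is_fwd_event fwd \<iota>1 e \<and> is_fwd_event fwd \<iota>1 e' \<longrightarrow> (conflict fwd \<iota>1 e e' \<longleftrightarrow> conflict fwd \<iota>2 e e'))"
proof -
  have coinitial_agree: "\<iota>1 t u \<longleftrightarrow> \<iota>2 t u" if "coinitial t u" for t u
    using indep_iff_diamond[OF assms(2-5) that] indep_iff_diamond[OF assms(6-9) that] by simp
  have ev_eq: "ev_eq fwd \<iota>1 = ev_eq fwd \<iota>2"
    using ev_eq_cong coinitial_agree by blast
  moreover have "core_indep \<iota>1 = core_indep \<iota>2"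
    using core_indep_cong coinitial_agree by blast
  moreover have "occ fwd \<iota>1 r e = occ fwd \<iota>2 r e" for r e
    using occ_cong[OF ev_eq] .
  ultimately show ?thesis
    by (simp add: causes_def conflict_def)
qed

end
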